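(* Let $X=X(s)$ be a strictly convex $C^{(3)}$ curve in the plane $\mathbb{R}^2$, parametrized by arclength. Suppose there is a function $\lambda(s)$ such that for all $s$ and all sufficiently small $h_1,h_2$ (with $X(s),X(s+h_1),X(s+h_2)$ distinct) we have $$U(s,h_1,h_2)=\lambda(s)\,T(s,h_1,h_2).$$ Then $\lambda(s)=\frac12$ for all $s$ and $X$ is an open part of a parabola.
   Context: A regular plane curve $X$ defined on an open interval is convex if for every point of $X$ the trace of $X$ lies entirely in one closed half-plane determined by the tangent line at that point. A simple convex curve $X$ is strictly convex if it is of class $C^{(3)}$ and has positive curvature with respect to the unit normal pointing to the convex side. For three distinct points $A=X(s)$, $A_i=X(s+h_i)$ ($i=1,2$) on $X$, let $\ell,\ell_1,\ell_2$ be the tangent lines of $X$ at $A,A_1,A_2$, and let $B=\ell_1\cap\ell_2$, $B_1=\ell\cap\ell_1$, $B_2=\ell\cap\ell_2$. Define $T(s,h_1,h_2)=|\triangle AA_1A_2|$ and $U(s,h_1,h_2)=|\triangle BB_1B_2|$ (areas). *)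

theory Defs
  imports "HOL-Analysis.Analysis"
begin

definition cross2 :: "real \<times> real \<Rightarrow> real \<times> real \<Rightarrow> real" where
  "cross2 a b = fst a * snd b - snd a * fst b"

definition tri_area :: "real \<times> real \<Rightarrow> real \<times> real \<Rightarrow> real \<times> real \<Rightarrow> real" where
  "tri_area A B C = \<bar>cross2 (B - A) (C - A)\<bar> / 2"

text \<open>Intersection point of the lines P + s u and Q + r v (meaningful when u, v not parallel).\<close>
definition line_inter :: "real \<times> real \<Rightarrow> real \<times> real \<Rightarrow> real \<times> real \<Rightarrow> real \<times> real \<Rightarrow> real \<times> real" where
  "line_inter P u Q v = P + (cross2 (Q - P) v / cross2 u v) *\<^sub>R u"

definition C3_on :: "real set \<Rightarrow> (real \<Rightarrow> real \<times> real) \<Rightarrow> bool" where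
  "C3_on I X \<longleftrightarrow> (\<exists>D1 D2 D3. \<forall>t\<in>I.
      (X has_vector_derivative D1 t) (at t) \<and>
      (D1 has_vector_derivative D2 t) (at t) \<and>
      (D2 has_vector_derivative D3 t) (at t) \<and>
      continuous (at t) D3)"

abbreviation vd1 :: "(real \<Rightarrow> real \<times> real) \<Rightarrow> real \<Rightarrow> real \<times> real" where
  "vd1 X t \<equiv> vector_derivative X (at t)"

abbreviation vd2 :: "(real \<Rightarrow> real \<times> real) \<Rightarrow> real \<Rightarrow> real \<times> real" where
  "vd2 X t \<equiv> vector_derivative (\<lambda>u. vector_derivative X (at u)) (at t)"

definition convex_curve :: "real set \<Rightarrow> (real \<Rightarrow> real \<times> real) \<Rightarrow> bool" where
  "convex_curve I X \<longleftrightarrow> (\<forall>t\<in>I.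
      (\<forall>u\<in>I. cross2 (vd1 X t) (X u - X t) \<ge> 0) \<or>
      (\<forall>u\<in>I. cross2 (vd1 X t) (X u - X t) \<le> 0))"

definition strictly_convex_curve :: "real set \<Rightarrow> (real \<Rightarrow> real \<times> real) \<Rightarrow> bool" where
  "strictly_convex_curve I X \<longleftrightarrow>
     inj_on X I \<and> convex_curve I X \<and> C3_on I X \<and>
     (\<forall>t\<in>I. vd1 X t \<noteq> 0 \<and>
        (\<exists>N. norm N = 1 \<and> inner N (vd1 X t) = 0 \<and>
             (\<forall>u\<in>I. inner (X u - X t) N \<ge> 0) \<and>
             inner (vd2 X t) N / (norm (vd1 X t))\<^sup>2 > 0))"

definition T_area :: "(real \<Rightarrow> real \<times> real) \<Rightarrow> real \<Rightarrow> real \<Rightarrow> real \<Rightarrow> real" where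
  "T_area X s h1 h2 = tri_area (X s) (X (s + h1)) (X (s + h2))"

definition U_area :: "(real \<Rightarrow> real \<times> real) \<Rightarrow> real \<Rightarrow> real \<Rightarrow> real \<Rightarrow> real" where
  "U_area X s h1 h2 =
     (let A = X s; A1 = X (s + h1); A2 = X (s + h2);
          d = vd1 X s; d1 = vd1 X (s + h1); d2 = vd1 X (s + h2);
          B = line_inter A1 d1 A2 d2;
          B1 = line_inter A d A1 d1;
          B2 = line_inter A d A2 d2
      in tri_area B B1 B2)"

text \<open>A parabola: image of y = x^2 under an invertible affine map.\<close>
definition is_parabola :: "(real \<times> real) set \<Rightarrow> bool" where
  "is_parabola P \<longleftrightarrow> (\<exists>c u w. cross2 u w \<noteq> 0 \<and>
      P = {c + t *\<^sub>R u + t\<^sup>2 *\<^sub>R w | t. True})"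

end

theory Submission
  imports Defs "HOL-Homology.Invariance_of_Domain" "HOL-Computational_Algebra.Polynomial"
begin

text \<open>
  Fix \<open>s\<close> and write \<open>X u - X s = x(u) T + y(u) N\<close> in the frame of the unit tangent
  \<open>T = X'(s)\<close>. The tangent at \<open>X u\<close> meets the tangent at \<open>X s\<close> in \<open>X s + m(u) T\<close>, so for
  \<open>A\<^sub>1 = X u\<close>, \<open>A\<^sub>2 = X v\<close> the triangle \<open>B B\<^sub>1 B\<^sub>2\<close> has its base on the tangent at \<open>X s\<close>;
  dividing \<open>U = \<lambda> T\<close> by \<open>|v - u|\<close> and letting \<open>v \<rightarrow> u\<close> yields \<open>|m'(u)| |y(u)| = \<lambda> |g(u)|\<close>, where
  \<open>g(u) = (X u - X s) \<times> X'(u)\<close> and \<open>m' = y \<kappa> / y'\<^sup>2\<close>. Expanding at \<open>u = s\<close>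
  (\<open>y \<sim> \<kappa> h\<^sup>2/2\<close>, \<open>y' \<sim> \<kappa> h\<close>, \<open>g \<sim> \<kappa> h\<^sup>2/2\<close>) forces \<open>\<lambda> = 1/2\<close>, and then the identity is
  the differential equation \<open>2 y\<^sup>2 \<kappa> = g y'\<^sup>2\<close>. It says precisely that \<open>m\<^sup>2/y\<close> and
  \<open>(x - 2m)/y\<close> are locally constant, so \<open>x\<close> and \<open>y\<close> are quadratic polynomials in \<open>2m\<close>:
  near every point the curve lies on a parabola. A nondegenerate parabola is determined by
  infinitely many of its points, so the local parabolas agree along the connected interval,
  and invariance of domain makes the trace open in it.
\<close>

lemma inner_real_pair: "inner (a :: real \<times> real) b = fst a * fst b + snd a * snd b"
  by (simp add: inner_prod_def)

lemma has_real_derivative_fst: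
  "(f has_vector_derivative f') F \<Longrightarrow> ((\<lambda>x. fst (f x)) has_real_derivative fst f') F"
  unfolding has_vector_derivative_def has_field_derivative_def
  by (drule has_derivative_fst, erule has_derivative_eq_rhs) (auto simp: fun_eq_iff)

lemma has_real_derivative_snd:
  "(f has_vector_derivative f') F \<Longrightarrow> ((\<lambda>x. snd (f x)) has_real_derivative snd f') F"
  unfolding has_vector_derivative_def has_field_derivative_def
  by (drule has_derivative_snd, erule has_derivative_eq_rhs) (auto simp: fun_eq_iff)

lemma has_real_derivative_cross2:
  assumes "(f has_vector_derivative f') (at x within S)" "(g has_vector_derivative g') (at x within S)"
  shows "((\<lambda>u. cross2 (f u) (g u)) has_real_derivative cross2 f' (g x) + cross2 (f x) g') (at x within S)"
proof -
  note d = has_real_derivative_fst[OF assms(1)] has_real_derivative_snd[OF assms(1)]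
    has_real_derivative_fst[OF assms(2)] has_real_derivative_snd[OF assms(2)]
  have "((\<lambda>u. fst (f u) * snd (g u) - snd (f u) * fst (g u)) has_real_derivative
     (fst f' * snd (g x) + snd g' * fst (f x)) - (snd f' * fst (g x) + fst g' * snd (f x))) (at x within S)"
    by (intro DERIV_diff DERIV_mult d)
  then show ?thesis
    unfolding cross2_def by (rule DERIV_cong) (simp add: algebra_simps)
qed

lemma has_real_derivative_inner:
  assumes "(f has_vector_derivative f') (at x within S)" "(g has_vector_derivative g') (at x within S)"
  shows "((\<lambda>u. inner (f u) (g u :: real \<times> real)) has_real_derivative inner f' (g x) + inner (f x) g')
    (at x within S)"
proof -
  note d = has_real_derivative_fst[OF assms(1)] has_real_derivative_snd[OF assms(1)]
    has_real_derivative_fst[OF assms(2)] has_real_derivative_snd[OF assms(2)]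
  have "((\<lambda>u. fst (f u) * fst (g u) + snd (f u) * snd (g u)) has_real_derivative
     (fst f' * fst (g x) + fst g' * fst (f x)) + (snd f' * snd (g x) + snd g' * snd (f x))) (at x within S)"
    by (intro DERIV_add DERIV_mult d)
  then show ?thesis
    unfolding inner_real_pair by (rule DERIV_cong) (simp add: algebra_simps)
qed

lemma cross2_self [simp]: "cross2 a a = 0"
  by (simp add: cross2_def)

lemma cross2_zero [simp]: "cross2 0 a = 0" "cross2 a 0 = 0"
  by (simp_all add: cross2_def)

lemma cross2_pluecker: "cross2 a c * cross2 b d - cross2 a d * cross2 b c = cross2 a b * cross2 c d"
  by (simp add: cross2_def algebra_simps)

definition perp :: "real \<times> real \<Rightarrow> real \<times> real" where
  "perp a = (- snd a, fst a)"

lemma cross2_perp: "norm T = 1 \<Longrightarrow> cross2 T (perp T) = 1"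
  by (simp add: perp_def cross2_def norm_prod_def power2_eq_square)

lemma cross2_unit_frame:
  assumes "norm (T :: real \<times> real) = 1"
  shows "cross2 a b = inner T a * cross2 T b - cross2 T a * inner T b"
proof -
  obtain t1 t2 where T: "T = (t1, t2)" by fastforce
  obtain a1 a2 where a: "a = (a1, a2)" by fastforce
  obtain b1 b2 where b: "b = (b1, b2)" by fastforce
  have unit: "t1 * t1 + t2 * t2 = 1"
    using assms by (simp add: norm_prod_def T power2_eq_square)
  have "(t1*a1 + t2*a2) * (t1*b2 - t2*b1) - (t1*a2 - t2*a1) * (t1*b1 + t2*b2)
      = (t1*t1 + t2*t2) * (a1*b2 - a2*b1)"
    by (simp add: algebra_simps)
  then show ?thesis by (simp add: T a b cross2_def inner_real_pair unit)
qed

lemma vector_unit_frame: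
  assumes "norm (T :: real \<times> real) = 1"
  shows "v = inner T v *\<^sub>R T + cross2 T v *\<^sub>R perp T"
proof -
  obtain a b where T: "T = (a, b)" by fastforce
  obtain p q where v: "v = (p, q)" by fastforce
  have unit: "a * a + b * b = 1"
    using assms by (simp add: norm_prod_def T power2_eq_square)
  have "(a*p + b*q) * a - (a*q - b*p) * b = (a*a + b*b) * p"
    "(a*p + b*q) * b + (a*q - b*p) * a = (a*a + b*b) * q"
    by (simp_all add: algebra_simps)
  then show ?thesis by (simp add: T v perp_def cross2_def inner_real_pair unit)
qed

lemma vector_cross2_basis:
  assumes "cross2 u w \<noteq> 0"
  shows "v = (cross2 v w / cross2 u w) *\<^sub>R u + (cross2 u v / cross2 u w) *\<^sub>R w"
proof -
  have "cross2 u w *\<^sub>R v = cross2 v w *\<^sub>R u + cross2 u v *\<^sub>R w"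
    by (simp add: cross2_def prod_eq_iff algebra_simps)
  then have "v = (1 / cross2 u w) *\<^sub>R (cross2 v w *\<^sub>R u + cross2 u v *\<^sub>R w)"
    using assms by (metis divide_self_if scaleR_one scaleR_scaleR times_divide_eq_left mult_1)
  then show ?thesis by (simp add: scaleR_add_right)
qed

lemma tri_area_base_on_line:
  "tri_area B (A + a *\<^sub>R T) (A + b *\<^sub>R T) = \<bar>b - a\<bar> * \<bar>cross2 T (B - A)\<bar> / 2"
proof -
  have "cross2 (A + a *\<^sub>R T - B) (A + b *\<^sub>R T - B) = (b - a) * cross2 T (B - A)"
    by (simp add: cross2_def algebra_simps)
  then show ?thesis by (simp add: tri_area_def abs_mult)
qed

lemma lhopital_power:
  fixes f f' :: "real \<Rightarrow> real"
  assumes deriv: "\<forall>\<^sub>F u in nhds s. (f has_real_derivative f' u) (at u)" and zero: "f s = 0"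
    and lim: "((\<lambda>u. f' u / (u - s) ^ n) \<longlongrightarrow> L) (at s)"
  shows "((\<lambda>u. f u / (u - s) ^ (n + 1)) \<longlongrightarrow> L / (n + 1)) (at s)"
proof (rule lhopital[where f'=f' and g'="\<lambda>u. (n + 1) * (u - s) ^ n"])
  have "isCont f s"
    using deriv by (auto dest: eventually_nhds_x_imp_x DERIV_isCont)
  then show "(f \<longlongrightarrow> 0) (at s)"
    using zero by (simp add: isCont_def)
  show "((\<lambda>u. (u - s) ^ (n + 1)) \<longlongrightarrow> 0) (at s)"
    by (rule tendsto_eq_intros refl | simp)+
  have near: "\<forall>\<^sub>F u in at s. u \<noteq> s"
    by (simp add: eventually_at_filter)
  show "\<forall>\<^sub>F u in at s. (u - s) ^ (n + 1) \<noteq> 0"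
    using near by eventually_elim simp
  show "\<forall>\<^sub>F u in at s. (n + 1) * (u - s) ^ n \<noteq> 0"
    using near by eventually_elim simp
  show "\<forall>\<^sub>F u in at s. (f has_real_derivative f' u) (at u)"
    using deriv by (simp add: eventually_at_filter eventually_mono)
  show "\<forall>\<^sub>F u in at s. ((\<lambda>u. (u - s) ^ (n + 1)) has_real_derivative (n + 1) * (u - s) ^ n) (at u)"
  proof (rule always_eventually, rule allI)
    fix u
    show "((\<lambda>u. (u - s) ^ (n + 1)) has_real_derivative (n + 1) * (u - s) ^ n) (at u)"
      using DERIV_power[OF DERIV_diff[OF DERIV_ident DERIV_const], where n="n + 1" and x=u] by simp
  qed
  show "((\<lambda>u. f' u / ((n + 1) * (u - s) ^ n)) \<longlongrightarrow> L / (n + 1)) (at s)"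
    using tendsto_divide[OF lim tendsto_const[of "real n + 1"]] by (simp add: field_simps)
qed

lemma eq_limit_if_deriv_zero_near:
  fixes f :: "real \<Rightarrow> real"
  assumes e: "e > 0"
    and deriv: "\<And>x. 0 < \<bar>x - s\<bar> \<Longrightarrow> \<bar>x - s\<bar> < e \<Longrightarrow> (f has_real_derivative 0) (at x)"
    and lim: "(f \<longlongrightarrow> L) (at s)" and u: "0 < \<bar>u - s\<bar>" "\<bar>u - s\<bar> < e"
  shows "f u = L"
proof -
  define S where "S = (if s < u then {s<..<s + e} else {s - e<..<s})"
  have S: "u \<in> S" "convex S" "s islimpt S" "\<And>x. x \<in> S \<Longrightarrow> 0 < \<bar>x - s\<bar> \<and> \<bar>x - s\<bar> < e"
    using u e
    by (auto simp: S_def islimpt_greaterThanLessThan1 islimpt_greaterThanLessThan2 split: if_splits)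
  obtain c where c: "\<And>x. x \<in> S \<Longrightarrow> f x = c"
    using has_field_derivative_zero_constant[OF S(2)] deriv S(4) has_field_derivative_at_within
    by metis
  have "(f \<longlongrightarrow> c) (at s within S)"
    by (rule tendsto_eventually) (use c in \<open>auto simp: eventually_at_filter\<close>)
  moreover have "(f \<longlongrightarrow> L) (at s within S)"
    using lim by (rule tendsto_within_subset) simp
  ultimately have "c = L"
    using S(3) tendsto_unique trivial_limit_within by blast
  then show ?thesis using c S(1) by simp
qed

lemma eventually_nonzero_numerator:
  fixes f g :: "'a :: t2_space \<Rightarrow> real"
  assumes "((\<lambda>u. f u / g u) \<longlongrightarrow> c) (at s)" "c \<noteq> 0"
  shows "\<forall>\<^sub>F u in at s. f u \<noteq> 0"
  using tendsto_imp_eventually_ne[OF assms] by eventually_elim auto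

section \<open>Parabolas\<close>

definition parabola :: "real \<times> real \<Rightarrow> real \<times> real \<Rightarrow> real \<times> real \<Rightarrow> (real \<times> real) set" where
  "parabola c u w = {c + t *\<^sub>R u + t\<^sup>2 *\<^sub>R w | t. True}"

lemma is_parabola_parabola: "cross2 u w \<noteq> 0 \<Longrightarrow> is_parabola (parabola c u w)"
  unfolding is_parabola_def parabola_def by blast

lemma parabola_param_inverse:
  assumes "cross2 u w \<noteq> 0" "p \<in> parabola c u w"
  shows "p = c + (cross2 (p - c) w / cross2 u w) *\<^sub>R u + (cross2 (p - c) w / cross2 u w)\<^sup>2 *\<^sub>R w"
proof -
  obtain t where p: "p = c + t *\<^sub>R u + t\<^sup>2 *\<^sub>R w"
    using assms(2) unfolding parabola_def by blast
  have "cross2 (p - c) w = t * cross2 u w"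
    unfolding p by (simp add: cross2_def algebra_simps power2_eq_square)
  then show ?thesis using p assms(1) by simp
qed

lemma mem_parabola_iff:
  assumes "cross2 u w \<noteq> 0"
  shows "p \<in> parabola c u w \<longleftrightarrow> cross2 u (p - c) / cross2 u w = (cross2 (p - c) w / cross2 u w)\<^sup>2"
proof
  assume "p \<in> parabola c u w"
  then obtain t where p: "p = c + t *\<^sub>R u + t\<^sup>2 *\<^sub>R w"
    unfolding parabola_def by blast
  have "cross2 (p - c) w = t * cross2 u w" "cross2 u (p - c) = t\<^sup>2 * cross2 u w"
    unfolding p by (simp_all add: cross2_def algebra_simps power2_eq_square)
  then show "cross2 u (p - c) / cross2 u w = (cross2 (p - c) w / cross2 u w)\<^sup>2"
    using assms by simp
next
  assume "cross2 u (p - c) / cross2 u w = (cross2 (p - c) w / cross2 u w)\<^sup>2"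
  then have "p - c = (cross2 (p - c) w / cross2 u w) *\<^sub>R u + (cross2 (p - c) w / cross2 u w)\<^sup>2 *\<^sub>R w"
    using vector_cross2_basis[OF assms, of "p - c"] by simp
  then show "p \<in> parabola c u w"
    unfolding parabola_def by (auto simp: algebra_simps intro!: exI[of _ "cross2 (p - c) w / cross2 u w"])
qed

lemma mem_parabola_tangent_frame:
  assumes T: "norm T = 1" and C: "C \<noteq> 0"
    and m: "m\<^sup>2 = C * cross2 T (p - c)" and x: "inner T (p - c) = 2 * m + K * cross2 T (p - c)"
  shows "p \<in> parabola c T ((1 / (4 * C)) *\<^sub>R (K *\<^sub>R T + perp T))"
proof -
  have y: "cross2 T (p - c) = (2 * m)\<^sup>2 / (4 * C)"
    using m C by (simp add: power_mult_distrib)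
  have "p = c + inner T (p - c) *\<^sub>R T + cross2 T (p - c) *\<^sub>R perp T"
    using vector_unit_frame[OF T, of "p - c"] by (simp add: diff_eq_eq ac_simps)
  also have "\<dots> = c + (2 * m) *\<^sub>R T + cross2 T (p - c) *\<^sub>R (K *\<^sub>R T + perp T)"
    unfolding x by (simp add: scaleR_add_left scaleR_add_right)
  also have "\<dots> = c + (2 * m) *\<^sub>R T + (2 * m)\<^sup>2 *\<^sub>R ((1 / (4 * C)) *\<^sub>R (K *\<^sub>R T + perp T))"
    unfolding y by simp
  finally show ?thesis
    unfolding parabola_def by blast
qed

lemma cross2_parabola_tangent_frame:
  "norm T = 1 \<Longrightarrow> cross2 T ((1 / (4 * C)) *\<^sub>R (K *\<^sub>R T + perp T)) = 1 / (4 * C)"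
  using cross2_perp[of T] by (simp add: cross2_def algebra_simps add_divide_distrib)

text \<open>In the parameter of the first parabola, membership in the second is a quartic equation.\<close>

lemma parabola_subset_of_infinite_inter:
  assumes nondeg: "cross2 u1 w1 \<noteq> 0" "cross2 u2 w2 \<noteq> 0"
    and S: "infinite S" "S \<subseteq> parabola c1 u1 w1" "S \<subseteq> parabola c2 u2 w2"
  shows "parabola c1 u1 w1 \<subseteq> parabola c2 u2 w2"
proof -
  define q where "q t = c1 + t *\<^sub>R u1 + t\<^sup>2 *\<^sub>R w1" for t
  define d where "d = cross2 u2 w2"
  define a0 where "a0 = cross2 (c1 - c2) w2 / d"
  define a1 where "a1 = cross2 u1 w2 / d"
  define a2 where "a2 = cross2 w1 w2 / d"
  define b0 where "b0 = cross2 u2 (c1 - c2) / d"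
  define b1 where "b1 = cross2 u2 u1 / d"
  define b2 where "b2 = cross2 u2 w1 / d"
  have A: "cross2 (q t - c2) w2 / d = a0 + a1 * t + a2 * t\<^sup>2" for t
    by (simp add: q_def a0_def a1_def a2_def cross2_def add_divide_distrib diff_divide_distrib
        algebra_simps)
  have B: "cross2 u2 (q t - c2) / d = b0 + b1 * t + b2 * t\<^sup>2" for t
    by (simp add: q_def b0_def b1_def b2_def cross2_def add_divide_distrib diff_divide_distrib
        algebra_simps)
  define P where "P = [: b0 - a0*a0, b1 - 2*a0*a1, b2 - a1*a1 - 2*a0*a2, - 2*a1*a2, - (a2*a2) :]"
  have P: "poly P t = (b0 + b1 * t + b2 * t\<^sup>2) - (a0 + a1 * t + a2 * t\<^sup>2)\<^sup>2" for t
    by (simp add: P_def power2_eq_square algebra_simps)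
  have mem: "q t \<in> parabola c2 u2 w2 \<longleftrightarrow> poly P t = 0" for t
    unfolding mem_parabola_iff[OF nondeg(2)] P A[symmetric] B[symmetric] d_def by simp
  have "S \<subseteq> q ` {t. q t \<in> S}"
    using S(2) unfolding parabola_def q_def by blast
  then have "infinite {t. q t \<in> S}"
    using S(1) finite_surj by blast
  moreover have "{t. q t \<in> S} \<subseteq> {t. poly P t = 0}"
    using S(3) mem by blast
  ultimately have "infinite {t. poly P t = 0}"
    using finite_subset by blast
  then have "P = 0"
    using poly_roots_finite by blast
  then have "\<forall>t. q t \<in> parabola c2 u2 w2"
    using mem by simp
  then show ?thesis
    unfolding parabola_def q_def by blast
qed

lemma parabola_eq_of_infinite_inter:
  assumes "cross2 u1 w1 \<noteq> 0" "cross2 u2 w2 \<noteq> 0"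
    and "infinite S" "S \<subseteq> parabola c1 u1 w1" "S \<subseteq> parabola c2 u2 w2"
  shows "parabola c1 u1 w1 = parabola c2 u2 w2"
  using parabola_subset_of_infinite_inter[of u1 w1 u2 w2 S c1 c2]
    parabola_subset_of_infinite_inter[of u2 w2 u1 w1 S c2 c1] assms
  by blast

lemma parabola_of_locally_parabolic:
  fixes X :: "real \<Rightarrow> real \<times> real"
  assumes I: "connected I" "s0 \<in> I" and inj: "inj_on X I"
    and local: "\<And>s. s \<in> I \<Longrightarrow> \<exists>e>0. \<exists>c u w. cross2 u w \<noteq> 0 \<and>
      (\<forall>v. \<bar>v - s\<bar> < e \<longrightarrow> v \<in> I \<and> X v \<in> parabola c u w)"
  obtains c u w where "cross2 u w \<noteq> 0" "X ` I \<subseteq> parabola c u w"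
proof -
  obtain E C U W where EW: "\<And>s. s \<in> I \<Longrightarrow> E s > 0 \<and> cross2 (U s) (W s) \<noteq> 0 \<and>
      (\<forall>v. \<bar>v - s\<bar> < E s \<longrightarrow> v \<in> I \<and> X v \<in> parabola (C s) (U s) (W s))"
    using local by metis
  define P where "P s = parabola (C s) (U s) (W s)" for s
  have overlap: "P s' = P s" if s: "s \<in> I" "s' \<in> I" "\<bar>s' - s\<bar> < E s" for s s'
  proof -
    define r where "r = min (E s - \<bar>s' - s\<bar>) (E s')"
    have "r > 0"
      using EW s by (simp add: r_def)
    define J where "J = {s' - r <..< s' + r}"
    have J: "\<bar>v - s'\<bar> < E s' \<and> \<bar>v - s\<bar> < E s" if "v \<in> J" for v
      using that by (auto simp: J_def r_def abs_less_iff)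
    have "infinite J"
      using \<open>r > 0\<close> by (simp add: J_def)
    moreover have "inj_on X J"
      using inj J EW[OF s(2)] by (meson inj_on_subset subsetI)
    ultimately have "infinite (X ` J)"
      using finite_imageD by blast
    then show ?thesis
      unfolding P_def using J EW[OF s(1)] EW[OF s(2)]
      by (intro parabola_eq_of_infinite_inter[of _ _ _ _ "X ` J"]) auto
  qed
  have "P s0 = P s" if s: "s \<in> I" for s
  proof (rule connected_local_const[OF I s, rule_format])
    fix a assume a: "a \<in> I"
    show "\<forall>\<^sub>F b in at a within I. P a = P b"
      unfolding eventually_at using EW[OF a] overlap[OF a]
      by (metis dist_real_def)
  qed
  then have "X ` I \<subseteq> P s0"
    using EW unfolding P_def by fastforce
  then show ?thesis
    using that EW[OF I(2)] unfolding P_def by blast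
qed

lemma openin_parabola_image:
  fixes X :: "real \<Rightarrow> real \<times> real"
  assumes nondeg: "cross2 u w \<noteq> 0" and X: "continuous_on I X" "inj_on X I" and I: "open I"
    and sub: "X ` I \<subseteq> parabola c u w"
  shows "openin (top_of_set (parabola c u w)) (X ` I)"
proof -
  define \<tau> where "\<tau> p = cross2 (p - c) w / cross2 u w" for p
  define \<phi> where "\<phi> t = c + t *\<^sub>R u + t\<^sup>2 *\<^sub>R w" for t
  have inv: "\<phi> (\<tau> p) = p" if "p \<in> parabola c u w" for p
    using parabola_param_inverse[OF nondeg that] by (simp add: \<phi>_def \<tau>_def)
  have cont: "isCont \<tau> p" for p
    using nondeg unfolding \<tau>_def cross2_def by (intro continuous_intros) auto
  have "continuous_on I (\<tau> \<circ> X)"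
    using X(1) by (rule continuous_on_compose) (simp add: cont continuous_at_imp_continuous_on)
  moreover have "inj_on (\<tau> \<circ> X) I"
  proof (rule inj_onI)
    fix a b assume ab: "a \<in> I" "b \<in> I" "(\<tau> \<circ> X) a = (\<tau> \<circ> X) b"
    then have "X a = X b"
      using inv sub by (metis comp_apply image_subset_iff)
    then show "a = b"
      using X(2) ab by (meson inj_onD)
  qed
  ultimately have "open (\<tau> -` ((\<tau> \<circ> X) ` I))"
    using I by (intro continuous_open_vimage invariance_of_domain cont)
  moreover have "X ` I = parabola c u w \<inter> \<tau> -` ((\<tau> \<circ> X) ` I)"
  proof
    show "X ` I \<subseteq> parabola c u w \<inter> \<tau> -` ((\<tau> \<circ> X) ` I)"
      using sub by auto
    show "parabola c u w \<inter> \<tau> -` ((\<tau> \<circ> X) ` I) \<subseteq> X ` I"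
    proof
      fix p assume p: "p \<in> parabola c u w \<inter> \<tau> -` ((\<tau> \<circ> X) ` I)"
      then obtain a where a: "a \<in> I" "\<tau> p = \<tau> (X a)"
        by auto
      have "p = \<phi> (\<tau> p)"
        using inv p by simp
      also have "\<dots> = \<phi> (\<tau> (X a))"
        using a(2) by simp
      also have "\<dots> = X a"
        using inv sub a(1) by blast
      finally show "p \<in> X ` I"
        using a(1) by blast
    qed
  qed
  ultimately show ?thesis
    unfolding openin_open by blast
qed

section \<open>Unit-speed curves in the tangent frame\<close>

locale unit_speed_C3_curve =
  fixes X D1 D2 D3 :: "real \<Rightarrow> real \<times> real" and I :: "real set"
  assumes open_I: "open I"
    and X_deriv: "\<And>t. t \<in> I \<Longrightarrow> (X has_vector_derivative D1 t) (at t)"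
    and D1_deriv: "\<And>t. t \<in> I \<Longrightarrow> (D1 has_vector_derivative D2 t) (at t)"
    and D2_deriv: "\<And>t. t \<in> I \<Longrightarrow> (D2 has_vector_derivative D3 t) (at t)"
    and D3_cont: "\<And>t. t \<in> I \<Longrightarrow> isCont D3 t"
    and unit_speed: "\<And>t. t \<in> I \<Longrightarrow> norm (D1 t) = 1"
begin

lemma D1_orth_D2: assumes t: "t \<in> I" shows "inner (D1 t) (D2 t) = 0"
proof -
  have "((\<lambda>u. inner (D1 u) (D1 u)) has_real_derivative inner (D2 t) (D1 t) + inner (D1 t) (D2 t)) (at t)"
    using has_real_derivative_inner[OF D1_deriv[OF t] D1_deriv[OF t]] .
  moreover have "((\<lambda>u. inner (D1 u) (D1 u)) has_real_derivative 0) (at t)"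
    by (rule has_field_derivative_transform_within_open[OF DERIV_const open_I t])
      (simp add: unit_speed power2_norm_eq_inner[symmetric])
  ultimately have "inner (D2 t) (D1 t) + inner (D1 t) (D2 t) = 0"
    by (rule DERIV_unique)
  then show ?thesis
    by (simp add: inner_commute)
qed

end

locale unit_speed_biregular_curve = unit_speed_C3_curve +
  assumes curvature_nonzero: "\<And>t. t \<in> I \<Longrightarrow> cross2 (D1 t) (D2 t) \<noteq> 0"
begin

definition "curv t = cross2 (D1 t) (D2 t)"

text \<open>
  The tangents at
  \<open>X s\<close> and \<open>X u\<close> meet in \<open>X s + tmeet s u *\<^sub>R D1 s\<close>.
\<close>

definition "xc s u = inner (D1 s) (X u - X s)"
definition "xc' s u = inner (D1 s) (D1 u)"
definition "xc'' s u = inner (D1 s) (D2 u)"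
definition "xc''' s u = inner (D1 s) (D3 u)"
definition "yc s u = cross2 (D1 s) (X u - X s)"
definition "yc' s u = cross2 (D1 s) (D1 u)"
definition "yc'' s u = cross2 (D1 s) (D2 u)"
definition "yc''' s u = cross2 (D1 s) (D3 u)"
definition "gc s u = cross2 (X u - X s) (D1 u)"
definition "gc' s u = cross2 (X u - X s) (D2 u)"
definition "tmeet s u = gc s u / yc' s u"

text \<open>Where \<open>yc' s u \<noteq> 0\<close>, \<open>defect s u = yc' s u * (xc s u - 2 * tmeet s u)\<close>.\<close>

definition "defect s u = 2 * yc s u * xc' s u - xc s u * yc' s u"
definition "defect' s u = xc' s u * yc' s u + 2 * yc s u * xc'' s u - xc s u * yc'' s u"
definition "defect'' s u = 3 * xc'' s u * yc' s u + 2 * yc s u * xc''' s u - xc s u * yc''' s u"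

lemma curv_nonzero: "s \<in> I \<Longrightarrow> curv s \<noteq> 0"
  using curvature_nonzero by (simp add: curv_def)

lemma X_diff_deriv: "u \<in> I \<Longrightarrow> ((\<lambda>v. X v - X a) has_vector_derivative D1 u) (at u)"
  using has_vector_derivative_diff[OF X_deriv has_vector_derivative_const] by simp

lemma xc_deriv: "u \<in> I \<Longrightarrow> (xc s has_real_derivative xc' s u) (at u)"
  unfolding xc_def xc'_def using has_real_derivative_inner[OF has_vector_derivative_const X_diff_deriv] by simp

lemma xc'_deriv: "u \<in> I \<Longrightarrow> (xc' s has_real_derivative xc'' s u) (at u)"
  unfolding xc'_def xc''_def using has_real_derivative_inner[OF has_vector_derivative_const D1_deriv] by simp

lemma xc''_deriv: "u \<in> I \<Longrightarrow> (xc'' s has_real_derivative xc''' s u) (at u)"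
  unfolding xc''_def xc'''_def using has_real_derivative_inner[OF has_vector_derivative_const D2_deriv] by simp

lemma yc_deriv: "u \<in> I \<Longrightarrow> (yc s has_real_derivative yc' s u) (at u)"
  unfolding yc_def yc'_def using has_real_derivative_cross2[OF has_vector_derivative_const X_diff_deriv] by simp

lemma yc'_deriv: "u \<in> I \<Longrightarrow> (yc' s has_real_derivative yc'' s u) (at u)"
  unfolding yc'_def yc''_def using has_real_derivative_cross2[OF has_vector_derivative_const D1_deriv] by simp

lemma yc''_deriv: "u \<in> I \<Longrightarrow> (yc'' s has_real_derivative yc''' s u) (at u)"
  unfolding yc''_def yc'''_def using has_real_derivative_cross2[OF has_vector_derivative_const D2_deriv] by simp

lemma gc_deriv: "u \<in> I \<Longrightarrow> (gc s has_real_derivative gc' s u) (at u)"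
  unfolding gc_def gc'_def using has_real_derivative_cross2[OF X_diff_deriv D1_deriv] by simp

lemma defect_deriv: assumes u: "u \<in> I" shows "(defect s has_real_derivative defect' s u) (at u)"
proof -
  have "((\<lambda>u. 2 * yc s u * xc' s u - xc s u * yc' s u) has_real_derivative
      2 * yc' s u * xc' s u + xc'' s u * (2 * yc s u) - (xc' s u * yc' s u + yc'' s u * xc s u)) (at u)"
    by (intro DERIV_diff DERIV_mult DERIV_cmult yc_deriv xc'_deriv xc_deriv yc'_deriv u)
  then show ?thesis
    unfolding defect_def[abs_def] defect'_def by (rule DERIV_cong) (simp add: algebra_simps)
qed

lemma defect'_deriv: assumes u: "u \<in> I" shows "(defect' s has_real_derivative defect'' s u) (at u)"
proof -
  have "((\<lambda>u. xc' s u * yc' s u + 2 * yc s u * xc'' s u - xc s u * yc'' s u) has_real_derivative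
      (xc'' s u * yc' s u + yc'' s u * xc' s u) + (2 * yc' s u * xc'' s u + xc''' s u * (2 * yc s u))
      - (xc' s u * yc'' s u + yc''' s u * xc s u)) (at u)"
    by (intro DERIV_diff DERIV_add DERIV_mult DERIV_cmult yc_deriv xc'_deriv xc_deriv yc'_deriv
        xc''_deriv yc''_deriv u)
  then show ?thesis
    unfolding defect'_def[abs_def] defect''_def by (rule DERIV_cong) (simp add: algebra_simps)
qed

lemma tmeet_deriv:
  assumes u: "u \<in> I" and nz: "yc' s u \<noteq> 0"
  shows "(tmeet s has_real_derivative yc s u * curv u / (yc' s u)\<^sup>2) (at u)"
proof -
  have "((\<lambda>v. gc s v / yc' s v) has_real_derivative
      (gc' s u * yc' s u - gc s u * yc'' s u) / (yc' s u * yc' s u)) (at u)"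
    by (rule DERIV_divide[OF gc_deriv[OF u] yc'_deriv[OF u] nz])
  moreover have "gc' s u * yc' s u - gc s u * yc'' s u = yc s u * curv u"
    using cross2_pluecker[of "X u - X s" "D2 u" "D1 s" "D1 u"]
    by (simp add: gc'_def yc'_def gc_def yc''_def yc_def curv_def cross2_def algebra_simps)
  ultimately show ?thesis
    unfolding tmeet_def[abs_def] by (simp add: power2_eq_square)
qed

lemma gc_unit_frame: "s \<in> I \<Longrightarrow> gc s u = xc s u * yc' s u - yc s u * xc' s u"
  using cross2_unit_frame[OF unit_speed, of s "X u - X s" "D1 u"]
  by (simp add: gc_def xc_def yc'_def yc_def xc'_def)

lemma frame_at_base:
  assumes "s \<in> I"
  shows "xc s s = 0" "xc' s s = 1" "xc'' s s = 0" "yc s s = 0" "yc' s s = 0" "yc'' s s = curv s"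
    "gc s s = 0" "gc' s s = 0" "defect s s = 0" "defect' s s = 0"
  using unit_speed[OF assms] D1_orth_D2[OF assms]
  by (simp_all add: xc_def xc'_def xc''_def yc_def yc'_def yc''_def gc_def gc'_def curv_def defect_def
      defect'_def power2_norm_eq_inner[symmetric])

lemma eventually_nhds_deriv:
  assumes "s \<in> I" "\<And>u. u \<in> I \<Longrightarrow> (f has_real_derivative f' u) (at u)"
  shows "\<forall>\<^sub>F u in nhds s. (f has_real_derivative f' u) (at u)"
  using eventually_nhds_in_open[OF open_I assms(1)] by (rule eventually_mono) (rule assms(2))

lemma tendsto_at_base:
  assumes "s \<in> I"
  shows "((\<lambda>u. xc'' s u) \<longlongrightarrow> 0) (at s)" "((\<lambda>u. xc''' s u) \<longlongrightarrow> xc''' s s) (at s)"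
    "((\<lambda>u. yc''' s u) \<longlongrightarrow> yc''' s s) (at s)" "(curv \<longlongrightarrow> curv s) (at s)"
proof -
  have "isCont D1 s" "isCont D2 s"
    using has_vector_derivative_continuous D1_deriv D2_deriv assms by blast+
  then have "isCont (xc'' s) s" "isCont (xc''' s) s" "isCont (yc''' s) s" "isCont curv s"
    using D3_cont[OF assms] unfolding xc''_def[abs_def] xc'''_def[abs_def] yc'''_def[abs_def]
      curv_def[abs_def] cross2_def inner_real_pair
    by (auto intro!: continuous_intros)
  then show "((\<lambda>u. xc'' s u) \<longlongrightarrow> 0) (at s)" "((\<lambda>u. xc''' s u) \<longlongrightarrow> xc''' s s) (at s)"
    "((\<lambda>u. yc''' s u) \<longlongrightarrow> yc''' s s) (at s)" "(curv \<longlongrightarrow> curv s) (at s)"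
    using frame_at_base[OF assms] by (simp_all add: isCont_def)
qed

lemma tendsto_quotients_at_base:
  assumes s: "s \<in> I"
  shows "((\<lambda>u. xc s u / (u - s)) \<longlongrightarrow> 1) (at s)" "((\<lambda>u. yc s u / (u - s)) \<longlongrightarrow> 0) (at s)"
    "((\<lambda>u. yc' s u / (u - s)) \<longlongrightarrow> curv s) (at s)" "((\<lambda>u. gc' s u / (u - s)) \<longlongrightarrow> curv s) (at s)"
proof -
  have "(gc' s has_real_derivative cross2 (D1 s) (D2 s) + cross2 (X s - X s) (D3 s)) (at s)"
    unfolding gc'_def[abs_def] using has_real_derivative_cross2[OF X_diff_deriv[OF s, where a=s] D2_deriv[OF s]] by simp
  then show "((\<lambda>u. gc' s u / (u - s)) \<longlongrightarrow> curv s) (at s)"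
    unfolding has_field_derivative_iff by (simp add: frame_at_base[OF s] curv_def)
  show "((\<lambda>u. xc s u / (u - s)) \<longlongrightarrow> 1) (at s)"
    using xc_deriv[OF s, where s=s] unfolding has_field_derivative_iff by (simp add: frame_at_base[OF s])
  show "((\<lambda>u. yc s u / (u - s)) \<longlongrightarrow> 0) (at s)"
    using yc_deriv[OF s, where s=s] unfolding has_field_derivative_iff by (simp add: frame_at_base[OF s])
  show "((\<lambda>u. yc' s u / (u - s)) \<longlongrightarrow> curv s) (at s)"
    using yc'_deriv[OF s, where s=s] unfolding has_field_derivative_iff by (simp add: frame_at_base[OF s])
qed

lemma tendsto_yc_div_sq:
  assumes s: "s \<in> I"
  shows "((\<lambda>u. yc s u / (u - s)\<^sup>2) \<longlongrightarrow> curv s / 2) (at s)"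
proof -
  have "((\<lambda>u. yc s u / (u - s) ^ (1 + 1)) \<longlongrightarrow> curv s / real (1 + 1)) (at s)"
    by (rule lhopital_power[OF eventually_nhds_deriv[OF s yc_deriv[where s=s]]])
      (use frame_at_base[OF s] tendsto_quotients_at_base(3)[OF s] in simp_all)
  then show ?thesis by (simp add: power2_eq_square)
qed

lemma tendsto_gc_div_sq:
  assumes s: "s \<in> I"
  shows "((\<lambda>u. gc s u / (u - s)\<^sup>2) \<longlongrightarrow> curv s / 2) (at s)"
proof -
  have "((\<lambda>u. gc s u / (u - s) ^ (1 + 1)) \<longlongrightarrow> curv s / real (1 + 1)) (at s)"
    by (rule lhopital_power[OF eventually_nhds_deriv[OF s gc_deriv[where s=s]]])
      (use frame_at_base[OF s] tendsto_quotients_at_base(4)[OF s] in simp_all)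
  then show ?thesis by (simp add: power2_eq_square)
qed

lemma tendsto_defect_div_cube:
  assumes s: "s \<in> I"
  shows "((\<lambda>u. defect s u / (u - s) ^ 3) \<longlongrightarrow> - yc''' s s / 6) (at s)"
proof -
  note quot = tendsto_quotients_at_base[OF s] and base = tendsto_at_base[OF s]
  have "((\<lambda>u. 3 * xc'' s u * (yc' s u / (u - s)) + 2 * (yc s u / (u - s)) * xc''' s u
      - (xc s u / (u - s)) * yc''' s u) \<longlongrightarrow> 3 * 0 * curv s + 2 * 0 * xc''' s s - 1 * yc''' s s) (at s)"
    by (intro tendsto_intros quot base)
  then have L1: "((\<lambda>u. defect'' s u / (u - s) ^ 1) \<longlongrightarrow> - yc''' s s) (at s)"
    by (simp add: defect''_def diff_divide_distrib add_divide_distrib)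
  have "((\<lambda>u. defect' s u / (u - s) ^ (1 + 1)) \<longlongrightarrow> - yc''' s s / real (1 + 1)) (at s)"
    by (rule lhopital_power[OF eventually_nhds_deriv[OF s defect'_deriv[where s=s]] _ L1]) (simp_all add: frame_at_base[OF s])
  then have L2: "((\<lambda>u. defect' s u / (u - s) ^ 2) \<longlongrightarrow> - yc''' s s / 2) (at s)"
    by (simp add: power2_eq_square)
  have "((\<lambda>u. defect s u / (u - s) ^ (2 + 1)) \<longlongrightarrow> (- yc''' s s / 2) / real (2 + 1)) (at s)"
    by (rule lhopital_power[OF eventually_nhds_deriv[OF s defect_deriv[where s=s]] _ L2]) (simp_all add: frame_at_base[OF s])
  then show ?thesis by simp
qed

lemma eventually_frame_nonzero:
  assumes s: "s \<in> I"
  shows "\<forall>\<^sub>F u in at s. u \<in> I \<and> u \<noteq> s \<and> yc' s u \<noteq> 0 \<and> yc s u \<noteq> 0 \<and> gc s u \<noteq> 0 \<and> curv u * gc s u > 0"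
proof -
  have "\<forall>\<^sub>F u in at s. curv u * (gc s u / (u - s)\<^sup>2) > 0"
  proof (rule order_tendstoD(1))
    show "((\<lambda>u. curv u * (gc s u / (u - s)\<^sup>2)) \<longlongrightarrow> curv s * (curv s / 2)) (at s)"
      by (intro tendsto_intros tendsto_at_base tendsto_gc_div_sq s)
    show "0 < curv s * (curv s / 2)"
      using curv_nonzero[OF s] by (auto simp: zero_less_mult_iff linorder_neq_iff)
  qed
  moreover have "\<forall>\<^sub>F u in at s. u \<in> I \<and> u \<noteq> s"
    using eventually_at_in_open[OF open_I s] by eventually_elim auto
  moreover have "\<forall>\<^sub>F u in at s. yc' s u \<noteq> 0" "\<forall>\<^sub>F u in at s. yc s u \<noteq> 0" "\<forall>\<^sub>F u in at s. gc s u \<noteq> 0"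
    using eventually_nonzero_numerator tendsto_quotients_at_base(3)[OF s] tendsto_yc_div_sq[OF s]
      tendsto_gc_div_sq[OF s] curv_nonzero[OF s] by force+
  ultimately show ?thesis
    by eventually_elim (simp add: zero_less_mult_iff zero_less_divide_iff)
qed

section \<open>The area identity\<close>

lemma X_vector_derivative: "t \<in> I \<Longrightarrow> vector_derivative X (at t) = D1 t"
  using vector_derivative_at[OF X_deriv] .

lemma U_area_eq:
  assumes "s \<in> I" "u \<in> I" "v \<in> I"
  shows "U_area X s (u - s) (v - s) = \<bar>tmeet s v - tmeet s u\<bar> *
    \<bar>yc s u + cross2 (X v - X u) (D1 v) / cross2 (D1 u) (D1 v) * yc' s u\<bar> / 2"
proof -
  define \<beta> where "\<beta> = cross2 (X v - X u) (D1 v) / cross2 (D1 u) (D1 v)"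
  have "line_inter (X s) (D1 s) (X u) (D1 u) = X s + tmeet s u *\<^sub>R D1 s"
    "line_inter (X s) (D1 s) (X v) (D1 v) = X s + tmeet s v *\<^sub>R D1 s"
    "line_inter (X u) (D1 u) (X v) (D1 v) = X u + \<beta> *\<^sub>R D1 u"
    by (simp_all add: line_inter_def tmeet_def gc_def yc'_def \<beta>_def)
  moreover have "cross2 (D1 s) (X u + \<beta> *\<^sub>R D1 u - X s) = yc s u + \<beta> * yc' s u"
    by (simp add: cross2_def yc_def yc'_def algebra_simps)
  ultimately show ?thesis
    unfolding U_area_def Let_def \<beta>_def[symmetric] using assms
    by (simp add: X_vector_derivative tri_area_base_on_line)
qed

lemma T_area_eq: "T_area X s (u - s) (v - s) = \<bar>cross2 (X u - X s) (X v - X s)\<bar> / 2"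
  by (simp add: T_area_def tri_area_def)

text \<open>Divided by \<open>|v - u|\<close>, the base \<open>|tmeet s v - tmeet s u|\<close> of \<open>B B\<^sub>1 B\<^sub>2\<close> tends to
  \<open>|tmeet' s u|\<close> and its height to \<open>|yc s u|\<close>, while twice the area of \<open>A A\<^sub>1 A\<^sub>2\<close>
  tends to \<open>|gc s u|\<close>.\<close>

lemma area_identity_limit:
  assumes u: "u \<in> I" and nz: "yc' s u \<noteq> 0"
    and ev: "\<forall>\<^sub>F v in at u. \<bar>tmeet s v - tmeet s u\<bar> *
        \<bar>yc s u + cross2 (X v - X u) (D1 v) / cross2 (D1 u) (D1 v) * yc' s u\<bar>
        = lam * \<bar>cross2 (X u - X s) (X v - X s)\<bar>"
  shows "\<bar>yc s u * curv u / (yc' s u)\<^sup>2\<bar> * \<bar>yc s u\<bar> = lam * \<bar>gc s u\<bar>"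
proof -
  define \<beta> where "\<beta> v = cross2 (X v - X u) (D1 v) / cross2 (D1 u) (D1 v)" for v
  have base: "((\<lambda>v. (tmeet s v - tmeet s u) / (v - u)) \<longlongrightarrow> yc s u * curv u / (yc' s u)\<^sup>2) (at u)"
    using tmeet_deriv[OF u nz] unfolding has_field_derivative_iff .
  have "((\<lambda>v. cross2 (X v - X u) (D1 v) / (v - u)) \<longlongrightarrow> 0) (at u)"
    using has_real_derivative_cross2[OF X_diff_deriv[OF u, where a=u] D1_deriv[OF u]]
    unfolding has_field_derivative_iff by simp
  moreover have "((\<lambda>v. cross2 (D1 u) (D1 v) / (v - u)) \<longlongrightarrow> curv u) (at u)"
    using has_real_derivative_cross2[OF has_vector_derivative_const[of "D1 u"] D1_deriv[OF u]]
    unfolding has_field_derivative_iff by (simp add: curv_def)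
  ultimately have "((\<lambda>v. (cross2 (X v - X u) (D1 v) / (v - u)) / (cross2 (D1 u) (D1 v) / (v - u)))
      \<longlongrightarrow> 0 / curv u) (at u)"
    using curv_nonzero[OF u] by (intro tendsto_divide)
  moreover have "\<forall>\<^sub>F v in at u. (cross2 (X v - X u) (D1 v) / (v - u)) / (cross2 (D1 u) (D1 v) / (v - u))
      = \<beta> v"
    by (simp add: eventually_at_filter \<beta>_def)
  ultimately have apex: "(\<beta> \<longlongrightarrow> 0) (at u)"
    using tendsto_cong by fastforce
  have lhs: "((\<lambda>v. \<bar>(tmeet s v - tmeet s u) / (v - u)\<bar> * \<bar>yc s u + \<beta> v * yc' s u\<bar>)
      \<longlongrightarrow> \<bar>yc s u * curv u / (yc' s u)\<^sup>2\<bar> * \<bar>yc s u + 0 * yc' s u\<bar>) (at u)"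
    by (intro tendsto_intros base apex)
  have "((\<lambda>v. cross2 (X u - X s) (X v - X s) / (v - u)) \<longlongrightarrow> gc s u) (at u)"
    using has_real_derivative_cross2[OF has_vector_derivative_const[of "X u - X s"] X_diff_deriv[OF u, where a=s]]
    unfolding has_field_derivative_iff by (simp add: gc_def)
  then have rhs: "((\<lambda>v. lam * \<bar>cross2 (X u - X s) (X v - X s) / (v - u)\<bar>) \<longlongrightarrow> lam * \<bar>gc s u\<bar>) (at u)"
    by (intro tendsto_intros)
  have "\<forall>\<^sub>F v in at u. \<bar>(tmeet s v - tmeet s u) / (v - u)\<bar> * \<bar>yc s u + \<beta> v * yc' s u\<bar>
      = lam * \<bar>cross2 (X u - X s) (X v - X s) / (v - u)\<bar>"
    using ev unfolding \<beta>_def[symmetric]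
    by (simp add: eventually_at_filter abs_divide)
  with lhs have "((\<lambda>v. lam * \<bar>cross2 (X u - X s) (X v - X s) / (v - u)\<bar>)
      \<longlongrightarrow> \<bar>yc s u * curv u / (yc' s u)\<^sup>2\<bar> * \<bar>yc s u + 0 * yc' s u\<bar>) (at u)"
    by (rule Lim_transform_eventually)
  then show ?thesis
    using tendsto_unique[OF _ _ rhs] by simp
qed

lemma area_identity_near:
  assumes s: "s \<in> I" and inj: "inj_on X I" and \<delta>: "\<delta> > 0"
    and H: "\<forall>h1 h2. \<bar>h1\<bar> < \<delta> \<and> \<bar>h2\<bar> < \<delta> \<and> s + h1 \<in> I \<and> s + h2 \<in> I \<and>
      X s \<noteq> X (s + h1) \<and> X s \<noteq> X (s + h2) \<and> X (s + h1) \<noteq> X (s + h2) \<longrightarrow>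
      U_area X s h1 h2 = lam * T_area X s h1 h2"
  shows "\<forall>\<^sub>F u in at s. \<bar>yc s u * curv u / (yc' s u)\<^sup>2\<bar> * \<bar>yc s u\<bar> = lam * \<bar>gc s u\<bar>"
proof -
  have "\<forall>\<^sub>F u in at s. u \<in> ball s \<delta>"
    using \<delta> by (intro eventually_at_in_open') auto
  then show ?thesis
    using eventually_frame_nonzero[OF s]
  proof eventually_elim
    case (elim u)
    then have u: "u \<in> I" "u \<noteq> s" "yc' s u \<noteq> 0"
      by auto
    have "u \<in> I \<inter> ball s \<delta> - {s}"
      using elim by auto
    then have "\<forall>\<^sub>F v in at u. v \<in> (I \<inter> ball s \<delta> - {s}) - {u}"
      using open_I by (intro eventually_at_in_open) auto
    then have "\<forall>\<^sub>F v in at u. \<bar>tmeet s v - tmeet s u\<bar> *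
        \<bar>yc s u + cross2 (X v - X u) (D1 v) / cross2 (D1 u) (D1 v) * yc' s u\<bar>
        = lam * \<bar>cross2 (X u - X s) (X v - X s)\<bar>"
    proof eventually_elim
      case (elim v)
      then have "X s \<noteq> X u" "X s \<noteq> X v" "X u \<noteq> X v"
        using inj s u unfolding inj_on_def by auto
      then have "U_area X s (u - s) (v - s) = lam * T_area X s (u - s) (v - s)"
        using H[rule_format, of "u - s" "v - s"] elim u \<open>u \<in> I \<inter> ball s \<delta> - {s}\<close>
        by (simp add: dist_real_def abs_minus_commute)
      then show ?case
        using elim u s by (simp add: U_area_eq T_area_eq)
    qed
    then show ?case
      using area_identity_limit[OF u(1) u(3)] by blast
  qed
qed

lemma area_ratio_eq_half:
  assumes s: "s \<in> I"
    and ev: "\<forall>\<^sub>F u in at s. \<bar>yc s u * curv u / (yc' s u)\<^sup>2\<bar> * \<bar>yc s u\<bar> = lam * \<bar>gc s u\<bar>"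
  shows "lam = 1 / 2"
proof -
  have scale: "(a / h\<^sup>2)\<^sup>2 * k / ((b / h)\<^sup>2 * \<bar>c / h\<^sup>2\<bar>) = a\<^sup>2 * k / (b\<^sup>2 * \<bar>c\<bar>)"
    if "h \<noteq> 0" "b \<noteq> 0" "c \<noteq> 0" for a b c k h :: real
    using that by (simp add: abs_divide power_divide field_simps power2_eq_square)
  define F where "F u = (yc s u / (u - s)\<^sup>2)\<^sup>2 * \<bar>curv u\<bar> / ((yc' s u / (u - s))\<^sup>2 * \<bar>gc s u / (u - s)\<^sup>2\<bar>)" for u
  have "(F \<longlongrightarrow> (curv s / 2)\<^sup>2 * \<bar>curv s\<bar> / ((curv s)\<^sup>2 * \<bar>curv s / 2\<bar>)) (at s)"
    unfolding F_def using curv_nonzero[OF s]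
    by (intro tendsto_intros tendsto_yc_div_sq tendsto_quotients_at_base tendsto_gc_div_sq
        tendsto_at_base s) auto
  also have "(curv s / 2)\<^sup>2 * \<bar>curv s\<bar> / ((curv s)\<^sup>2 * \<bar>curv s / 2\<bar>) = 1 / 2"
    using curv_nonzero[OF s] by (simp add: power2_eq_square abs_mult field_simps)
  finally have "(F \<longlongrightarrow> 1 / 2) (at s)" .
  moreover have "\<forall>\<^sub>F u in at s. F u = lam"
    using ev eventually_frame_nonzero[OF s]
  proof eventually_elim
    case (elim u)
    then have nz: "u - s \<noteq> 0" "yc' s u \<noteq> 0" "gc s u \<noteq> 0"
      by auto
    have "\<bar>yc s u * curv u / (yc' s u)\<^sup>2\<bar> * \<bar>yc s u\<bar> = (yc s u)\<^sup>2 * \<bar>curv u\<bar> / (yc' s u)\<^sup>2"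
      by (simp add: abs_mult abs_divide power2_eq_square)
    then have "lam = (yc s u)\<^sup>2 * \<bar>curv u\<bar> / ((yc' s u)\<^sup>2 * \<bar>gc s u\<bar>)"
      using elim(1) nz by (simp add: field_simps)
    also have "\<dots> = F u"
      unfolding F_def using scale[OF nz] by simp
    finally show ?case by simp
  qed
  ultimately have "((\<lambda>u. lam) \<longlongrightarrow> 1 / 2) (at s)"
    by (rule Lim_transform_eventually)
  then show ?thesis
    using tendsto_const_iff[OF trivial_limit_at] by blast
qed

text \<open>With \<open>\<lambda> = 1/2\<close> the area identity becomes a differential equation for the tangent frame
  coordinates; the sign of \<open>curv u * gc s u\<close> removes the absolute values.\<close>

lemma area_identity_ode:
  assumes s: "s \<in> I"
    and ev: "\<forall>\<^sub>F u in at s. \<bar>yc s u * curv u / (yc' s u)\<^sup>2\<bar> * \<bar>yc s u\<bar> = 1 / 2 * \<bar>gc s u\<bar>"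
  shows "\<forall>\<^sub>F u in at s. u \<in> I \<and> u \<noteq> s \<and> yc' s u \<noteq> 0 \<and> yc s u \<noteq> 0 \<and>
    2 * (yc s u)\<^sup>2 * curv u = gc s u * (yc' s u)\<^sup>2"
  using ev eventually_frame_nonzero[OF s]
proof eventually_elim
  case (elim u)
  then have "2 * (yc s u)\<^sup>2 * \<bar>curv u\<bar> = \<bar>gc s u\<bar> * (yc' s u)\<^sup>2"
    by (simp add: abs_mult abs_divide power2_eq_square field_simps)
  then have "2 * (yc s u)\<^sup>2 * (\<bar>curv u\<bar> * \<bar>gc s u\<bar>) = (\<bar>gc s u\<bar> * \<bar>gc s u\<bar>) * (yc' s u)\<^sup>2"
    by (metis mult.assoc mult.commute)
  moreover have "\<bar>curv u\<bar> * \<bar>gc s u\<bar> = curv u * gc s u"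
    using elim by (simp add: abs_mult[symmetric])
  ultimately have "gc s u * (2 * (yc s u)\<^sup>2 * curv u) = gc s u * (gc s u * (yc' s u)\<^sup>2)"
    by (simp add: abs_mult_self_eq mult_ac)
  then show ?case
    using elim by simp
qed

lemma tmeet_sq_div_yc_deriv:
  assumes u: "u \<in> I" and nz: "yc' s u \<noteq> 0" "yc s u \<noteq> 0"
    and ode: "2 * (yc s u)\<^sup>2 * curv u = gc s u * (yc' s u)\<^sup>2"
  shows "((\<lambda>v. (tmeet s v)\<^sup>2 / yc s v) has_real_derivative 0) (at u)"
proof -
  have "((\<lambda>v. (tmeet s v)\<^sup>2 / yc s v) has_real_derivative
      (of_nat 2 * (yc s u * curv u / (yc' s u)\<^sup>2 * tmeet s u ^ (2 - Suc 0)) * yc s u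
        - (tmeet s u)\<^sup>2 * yc' s u) / (yc s u * yc s u)) (at u)"
    by (intro DERIV_divide DERIV_power tmeet_deriv yc_deriv u nz)
  moreover have "of_nat 2 * (yc s u * curv u / (yc' s u)\<^sup>2 * tmeet s u ^ (2 - Suc 0)) * yc s u
      - (tmeet s u)\<^sup>2 * yc' s u
      = gc s u / (yc' s u) ^ 3 * (2 * (yc s u)\<^sup>2 * curv u - gc s u * (yc' s u)\<^sup>2)"
    using nz by (simp add: tmeet_def power2_eq_square power3_eq_cube field_simps)
  ultimately show ?thesis
    using ode by simp
qed

lemma affine_ratio_deriv:
  assumes s: "s \<in> I" and u: "u \<in> I" and nz: "yc' s u \<noteq> 0" "yc s u \<noteq> 0"
    and ode: "2 * (yc s u)\<^sup>2 * curv u = gc s u * (yc' s u)\<^sup>2"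
  shows "((\<lambda>v. (xc s v - 2 * tmeet s v) / yc s v) has_real_derivative 0) (at u)"
proof -
  have "((\<lambda>v. (xc s v - 2 * tmeet s v) / yc s v) has_real_derivative
      ((xc' s u - 2 * (yc s u * curv u / (yc' s u)\<^sup>2)) * yc s u - (xc s u - 2 * tmeet s u) * yc' s u)
        / (yc s u * yc s u)) (at u)"
    by (intro DERIV_divide DERIV_diff DERIV_cmult tmeet_deriv yc_deriv xc_deriv u nz)
  moreover have "(xc' s u - 2 * (yc s u * curv u / (yc' s u)\<^sup>2)) * yc s u - (xc s u - 2 * tmeet s u) * yc' s u
      = xc' s u * yc s u - xc s u * yc' s u + gc s u"
  proof -
    have "2 * (yc s u * curv u / (yc' s u)\<^sup>2) * yc s u = gc s u" "tmeet s u * yc' s u = gc s u"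
      using ode nz by (simp_all add: tmeet_def power2_eq_square field_simps)
    then show ?thesis by (simp add: algebra_simps)
  qed
  ultimately show ?thesis
    using gc_unit_frame[OF s, of u] by simp
qed

lemma tendsto_tmeet_sq_div_yc:
  assumes s: "s \<in> I"
  shows "((\<lambda>u. (tmeet s u)\<^sup>2 / yc s u) \<longlongrightarrow> 1 / (2 * curv s)) (at s)"
proof -
  define F where "F u = (gc s u / (u - s)\<^sup>2)\<^sup>2 / ((yc' s u / (u - s))\<^sup>2 * (yc s u / (u - s)\<^sup>2))" for u
  have "(F \<longlongrightarrow> (curv s / 2)\<^sup>2 / ((curv s)\<^sup>2 * (curv s / 2))) (at s)"
    unfolding F_def using curv_nonzero[OF s]
    by (intro tendsto_intros tendsto_yc_div_sq tendsto_quotients_at_base tendsto_gc_div_sq s) simp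
  also have "(curv s / 2)\<^sup>2 / ((curv s)\<^sup>2 * (curv s / 2)) = 1 / (2 * curv s)"
    using curv_nonzero[OF s] by (simp add: power2_eq_square field_simps)
  finally have "(F \<longlongrightarrow> 1 / (2 * curv s)) (at s)" .
  moreover have "\<forall>\<^sub>F u in at s. F u = (tmeet s u)\<^sup>2 / yc s u"
    using eventually_frame_nonzero[OF s]
  proof eventually_elim
    case (elim u)
    have "(g / h\<^sup>2)\<^sup>2 / ((b / h)\<^sup>2 * (a / h\<^sup>2)) = g\<^sup>2 / (b\<^sup>2 * a)" if "h \<noteq> 0" for g b a h :: real
      using that by (simp add: power_divide field_simps power2_eq_square)
    then have "F u = (gc s u)\<^sup>2 / ((yc' s u)\<^sup>2 * yc s u)"
      using elim by (simp add: F_def)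
    also have "\<dots> = (tmeet s u)\<^sup>2 / yc s u"
      by (simp add: tmeet_def power_divide)
    finally show ?case .
  qed
  ultimately show ?thesis
    by (rule Lim_transform_eventually)
qed

lemma tendsto_affine_ratio:
  assumes s: "s \<in> I"
  shows "((\<lambda>u. (xc s u - 2 * tmeet s u) / yc s u) \<longlongrightarrow> - yc''' s s / (3 * (curv s)\<^sup>2)) (at s)"
proof -
  define F where "F u = (defect s u / (u - s) ^ 3) / ((yc' s u / (u - s)) * (yc s u / (u - s)\<^sup>2))" for u
  have "(F \<longlongrightarrow> (- yc''' s s / 6) / (curv s * (curv s / 2))) (at s)"
    unfolding F_def using curv_nonzero[OF s]
    by (intro tendsto_intros tendsto_yc_div_sq tendsto_quotients_at_base tendsto_defect_div_cube s) simp
  also have "(- yc''' s s / 6) / (curv s * (curv s / 2)) = - yc''' s s / (3 * (curv s)\<^sup>2)"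
    using curv_nonzero[OF s] by (simp add: power2_eq_square field_simps)
  finally have "(F \<longlongrightarrow> - yc''' s s / (3 * (curv s)\<^sup>2)) (at s)" .
  moreover have "\<forall>\<^sub>F u in at s. F u = (xc s u - 2 * tmeet s u) / yc s u"
    using eventually_frame_nonzero[OF s]
  proof eventually_elim
    case (elim u)
    have "(n / h ^ 3) / ((b / h) * (a / h\<^sup>2)) = n / (b * a)" if "h \<noteq> 0" for n b a h :: real
      using that by (simp add: power_divide field_simps power2_eq_square power3_eq_cube)
    then have "F u = defect s u / (yc' s u * yc s u)"
      using elim by (simp add: F_def)
    moreover have "xc s u - 2 * tmeet s u = defect s u / yc' s u"
      using elim gc_unit_frame[OF s, of u] by (simp add: tmeet_def defect_def field_simps)
    ultimately show ?case
      by simp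
  qed
  ultimately show ?thesis
    by (rule Lim_transform_eventually)
qed

lemma tangent_frame_quadratic_near:
  assumes s: "s \<in> I"
    and ev: "\<forall>\<^sub>F u in at s. \<bar>yc s u * curv u / (yc' s u)\<^sup>2\<bar> * \<bar>yc s u\<bar> = 1 / 2 * \<bar>gc s u\<bar>"
  obtains e where "e > 0" "\<And>u. \<bar>u - s\<bar> < e \<Longrightarrow> u \<in> I"
    and "\<And>u. 0 < \<bar>u - s\<bar> \<Longrightarrow> \<bar>u - s\<bar> < e \<Longrightarrow>
      (tmeet s u)\<^sup>2 = 1 / (2 * curv s) * yc s u \<and>
      xc s u = 2 * tmeet s u + - yc''' s s / (3 * (curv s)\<^sup>2) * yc s u"
proof -
  obtain d where d: "d > 0" and near: "\<And>u. u \<noteq> s \<Longrightarrow> dist u s < d \<Longrightarrow>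
      u \<in> I \<and> yc' s u \<noteq> 0 \<and> yc s u \<noteq> 0 \<and> 2 * (yc s u)\<^sup>2 * curv u = gc s u * (yc' s u)\<^sup>2"
    using area_identity_ode[OF s ev] unfolding eventually_at by blast
  obtain r where r: "r > 0" "ball s r \<subseteq> I"
    using open_I s openE by blast
  define e where "e = min d r"
  have e: "e > 0" "\<And>u. \<bar>u - s\<bar> < e \<Longrightarrow> u \<in> I"
    using d r by (auto simp: e_def dist_real_def subset_iff)
  have near_e: "u \<in> I \<and> yc' s u \<noteq> 0 \<and> yc s u \<noteq> 0 \<and> 2 * (yc s u)\<^sup>2 * curv u = gc s u * (yc' s u)\<^sup>2"
    if "0 < \<bar>u - s\<bar>" "\<bar>u - s\<bar> < e" for u
    using near[of u] that by (simp add: e_def dist_real_def)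
  have C: "(tmeet s u)\<^sup>2 / yc s u = 1 / (2 * curv s)" if "0 < \<bar>u - s\<bar>" "\<bar>u - s\<bar> < e" for u
    by (rule eq_limit_if_deriv_zero_near[OF e(1) _ tendsto_tmeet_sq_div_yc[OF s] that])
      (use near_e in \<open>auto intro!: tmeet_sq_div_yc_deriv\<close>)
  have K: "(xc s u - 2 * tmeet s u) / yc s u = - yc''' s s / (3 * (curv s)\<^sup>2)"
    if "0 < \<bar>u - s\<bar>" "\<bar>u - s\<bar> < e" for u
    by (rule eq_limit_if_deriv_zero_near[OF e(1) _ tendsto_affine_ratio[OF s] that])
      (use near_e in \<open>auto intro!: affine_ratio_deriv[OF s]\<close>)
  show ?thesis
  proof (rule that[OF e])
    fix u assume u: "0 < \<bar>u - s\<bar>" "\<bar>u - s\<bar> < e"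
    then have "yc s u \<noteq> 0"
      using near_e by blast
    then show "(tmeet s u)\<^sup>2 = 1 / (2 * curv s) * yc s u \<and>
        xc s u = 2 * tmeet s u + - yc''' s s / (3 * (curv s)\<^sup>2) * yc s u"
      using C[OF u] K[OF u] by (simp add: field_simps)
  qed
qed

lemma locally_parabolic:
  assumes s: "s \<in> I"
    and ev: "\<forall>\<^sub>F u in at s. \<bar>yc s u * curv u / (yc' s u)\<^sup>2\<bar> * \<bar>yc s u\<bar> = lam * \<bar>gc s u\<bar>"
  shows "lam = 1 / 2"
    and "\<exists>e>0. \<exists>c p w. cross2 p w \<noteq> 0 \<and> (\<forall>v. \<bar>v - s\<bar> < e \<longrightarrow> v \<in> I \<and> X v \<in> parabola c p w)"
proof -
  show lam: "lam = 1 / 2"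
    by (rule area_ratio_eq_half[OF s ev])
  define C where "C = 1 / (2 * curv s)"
  define K where "K = - yc''' s s / (3 * (curv s)\<^sup>2)"
  obtain e where e: "e > 0" "\<And>u. \<bar>u - s\<bar> < e \<Longrightarrow> u \<in> I"
    and quadratic: "\<And>u. 0 < \<bar>u - s\<bar> \<Longrightarrow> \<bar>u - s\<bar> < e \<Longrightarrow>
      (tmeet s u)\<^sup>2 = C * yc s u \<and> xc s u = 2 * tmeet s u + K * yc s u"
    by (rule tangent_frame_quadratic_near[OF s, folded C_def K_def]) (use ev lam in simp_all)
  have C_nz: "C \<noteq> 0"
    using curv_nonzero[OF s] by (simp add: C_def)
  define w where "w = (1 / (4 * C)) *\<^sub>R (K *\<^sub>R D1 s + perp (D1 s))"
  have "X v \<in> parabola (X s) (D1 s) w" if v: "\<bar>v - s\<bar> < e" for v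
  proof (cases "v = s")
    case True
    then show ?thesis
      unfolding parabola_def by (auto intro: exI[of _ 0])
  next
    case False
    then have "(tmeet s v)\<^sup>2 = C * yc s v" "xc s v = 2 * tmeet s v + K * yc s v"
      using quadratic v by auto
    then show ?thesis
      unfolding w_def xc_def yc_def by (rule mem_parabola_tangent_frame[OF unit_speed[OF s] C_nz])
  qed
  moreover have "cross2 (D1 s) w \<noteq> 0"
    unfolding w_def using C_nz unit_speed[OF s] by (simp add: cross2_parabola_tangent_frame)
  ultimately show "\<exists>e>0. \<exists>c p w. cross2 p w \<noteq> 0 \<and> (\<forall>v. \<bar>v - s\<bar> < e \<longrightarrow> v \<in> I \<and> X v \<in> parabola c p w)"
    using e by blast
qed

end

lemma unit_speed_biregular_if_strictly_convex:
  assumes I: "open I" and sc: "strictly_convex_curve I X"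
    and arclen: "\<forall>s\<in>I. norm (vector_derivative X (at s)) = 1"
  obtains D1 D2 D3 where "unit_speed_biregular_curve X D1 D2 D3 I"
proof -
  obtain D1 D2 D3 where D: "\<And>t. t \<in> I \<Longrightarrow> (X has_vector_derivative D1 t) (at t) \<and>
      (D1 has_vector_derivative D2 t) (at t) \<and> (D2 has_vector_derivative D3 t) (at t) \<and>
      continuous (at t) D3"
    using sc unfolding strictly_convex_curve_def C3_on_def by blast
  have vd1: "vd1 X t = D1 t" if "t \<in> I" for t
    using D[OF that] vector_derivative_at by blast
  interpret unit_speed_C3_curve X D1 D2 D3 I
  proof
    show "norm (D1 t) = 1" if "t \<in> I" for t
      using arclen vd1 that by simp
  qed (use I D in auto)
  have vd2: "vd2 X t = D2 t" if t: "t \<in> I" for t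
  proof (rule vector_derivative_at)
    show "((\<lambda>u. vd1 X u) has_vector_derivative D2 t) (at t)"
      by (rule has_vector_derivative_transform_within_open[OF D1_deriv[OF t] I t]) (simp add: vd1)
  qed
  have "cross2 (D1 t) (D2 t) \<noteq> 0" if t: "t \<in> I" for t
  proof
    assume "cross2 (D1 t) (D2 t) = 0"
    then have "D2 t = 0"
      using vector_unit_frame[OF unit_speed[OF t], of "D2 t"] D1_orth_D2[OF t] by simp
    moreover have "\<exists>N. inner (vd2 X t) N / (norm (vd1 X t))\<^sup>2 > 0"
      using sc t unfolding strictly_convex_curve_def by fast
    ultimately show False
      using vd2[OF t] by simp
  qed
  then have "unit_speed_biregular_curve X D1 D2 D3 I"
    by unfold_locales
  then show ?thesis ..
qed

theorem theorem2:
  fixes X :: "real \<Rightarrow> real \<times> real" and I :: "real set" and lam :: "real \<Rightarrow> real"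
  assumes I: "open I" "is_interval I" "I \<noteq> {}"
    and sc: "strictly_convex_curve I X"
    and arclen: "\<forall>s\<in>I. norm (vector_derivative X (at s)) = 1"
    and hyp: "\<forall>s\<in>I. \<exists>\<delta>>0. \<forall>h1 h2. \<bar>h1\<bar> < \<delta> \<and> \<bar>h2\<bar> < \<delta> \<and>
                 s + h1 \<in> I \<and> s + h2 \<in> I \<and>
                 X s \<noteq> X (s + h1) \<and> X s \<noteq> X (s + h2) \<and> X (s + h1) \<noteq> X (s + h2) \<longrightarrow>
                 U_area X s h1 h2 = lam s * T_area X s h1 h2"
  shows "(\<forall>s\<in>I. lam s = 1 / 2) \<and>
         (\<exists>P. is_parabola P \<and> X ` I \<subseteq> P \<and> openin (top_of_set P) (X ` I))"
proof -
  obtain D1 D2 D3 where "unit_speed_biregular_curve X D1 D2 D3 I"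
    using unit_speed_biregular_if_strictly_convex[OF I(1) sc arclen] .
  then interpret unit_speed_biregular_curve X D1 D2 D3 I .
  have inj: "inj_on X I"
    using sc by (simp add: strictly_convex_curve_def)
  have area_identity: "\<forall>\<^sub>F u in at s. \<bar>yc s u * curv u / (yc' s u)\<^sup>2\<bar> * \<bar>yc s u\<bar> = lam s * \<bar>gc s u\<bar>"
    if s: "s \<in> I" for s
  proof -
    obtain \<delta> where "\<delta> > 0" "\<forall>h1 h2. \<bar>h1\<bar> < \<delta> \<and> \<bar>h2\<bar> < \<delta> \<and> s + h1 \<in> I \<and> s + h2 \<in> I \<and>
        X s \<noteq> X (s + h1) \<and> X s \<noteq> X (s + h2) \<and> X (s + h1) \<noteq> X (s + h2) \<longrightarrow>
        U_area X s h1 h2 = lam s * T_area X s h1 h2"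
      using hyp s by blast
    then show ?thesis
      by (rule area_identity_near[OF s inj])
  qed
  obtain s0 where "s0 \<in> I"
    using I(3) by blast
  then obtain c u w where parabola: "cross2 u w \<noteq> 0" "X ` I \<subseteq> parabola c u w"
    using parabola_of_locally_parabolic[OF is_interval_connected[OF I(2)] _ inj]
      locally_parabolic(2)[OF _ area_identity] by metis
  moreover have "continuous_on I X"
    using X_deriv by (intro continuous_at_imp_continuous_on ballI has_vector_derivative_continuous)
  ultimately have "openin (top_of_set (parabola c u w)) (X ` I)"
    by (intro openin_parabola_image inj I(1))
  then show ?thesis
    using locally_parabolic(1)[OF _ area_identity] is_parabola_parabola[OF parabola(1)] parabola(2)
    by blast
qed

end
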